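(* Let $z,z'$ be admissible with $z\ne z'$, and let $x,y>0$. Then $$K(x,y)=\frac{1}{\sqrt{xy}}\left\{\frac{\sin\pi z\cdot\sin\pi z'}{\pi\sin\pi(z-z')}\cdot\frac{(x/y)^{\frac{z-z'}2}-(x/y)^{\frac{z'-z}2}}{(x/y)^{1/2}-(x/y)^{-1/2}}+r'(x,y)\right\},$$ where, as $x,y\to0$, $r'(x,y)=O(\max\{x,y\})$ if $z'=\bar z\ne z$, and $r'(x,y)=O\big((\max\{x,y\})^{1-|z-z'|}\big)$ if $m<z,z'<m+1$ for some $m\in\mathbb Z$.
   Context: Admissible parameters: $z'=\bar z$, $z\notin\mathbb Z$, or $z,z'\in\mathbb R$ with $m<z,z'<m+1$ for some $m\in\mathbb Z$. The Whittaker kernel is $K(x,y)=\frac{1}{\Gamma(z)\Gamma(z')}\frac{\varphi_1(x)\varphi_2(y)-\varphi_1(y)\varphi_2(x)}{x-y}$ for $x,y>0$ (at $x=y$ by continuity), where $\varphi_1(x)=x^{-1/2}W_{\frac{z+z'+1}{2},\frac{z-z'}{2}}(x)$, $\varphi_2(x)=x^{-1/2}W_{\frac{z+z'-1}{2},\frac{z-z'}{2}}(x)$ and $W_{\kappa,\mu}$ is the Whittaker function. At $x=y$ the bracketed main term is understood by continuity. *)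

theory Defs
  imports "HOL-Analysis.Analysis"
begin

definition admissible :: "complex \<Rightarrow> complex \<Rightarrow> bool" where
  "admissible z z' \<longleftrightarrow>
     (z' = cnj z \<and> z \<notin> \<int>) \<or>
     (z \<in> \<real> \<and> z' \<in> \<real> \<and>
       (\<exists>m::int. of_int m < Re z \<and> Re z < of_int m + 1 \<and>
                  of_int m < Re z' \<and> Re z' < of_int m + 1))"

text \<open>Kummer's confluent hypergeometric function M(a,b,w) (b not a non-positive integer).\<close>
definition kummerM :: "complex \<Rightarrow> complex \<Rightarrow> complex \<Rightarrow> complex" where
  "kummerM a b w = (\<Sum>n. pochhammer a n / (pochhammer b n * fact n) * w ^ n)"

text \<open>Whittaker function M_{kappa,mu}(x), x > 0 (DLMF 13.14.2).\<close>
definition whittakerM :: "complex \<Rightarrow> complex \<Rightarrow> real \<Rightarrow> complex" where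
  "whittakerM \<kappa> \<mu> x =
     exp (- of_real x / 2) * of_real x powr (\<mu> + 1/2) * kummerM (1/2 + \<mu> - \<kappa>) (1 + 2*\<mu>) (of_real x)"

text \<open>Whittaker function W_{kappa,mu}(x), x > 0, via DLMF 13.14.33
  (valid whenever 2 mu is not an integer, which is the only case used below).\<close>
definition whittakerW :: "complex \<Rightarrow> complex \<Rightarrow> real \<Rightarrow> complex" where
  "whittakerW \<kappa> \<mu> x =
     Gamma (-2*\<mu>) * rGamma (1/2 - \<mu> - \<kappa>) * whittakerM \<kappa> \<mu> x
   + Gamma (2*\<mu>) * rGamma (1/2 + \<mu> - \<kappa>) * whittakerM \<kappa> (-\<mu>) x"

definition phi1 :: "complex \<Rightarrow> complex \<Rightarrow> real \<Rightarrow> complex" where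
  "phi1 z z' x = of_real x powr (-1/2) * whittakerW ((z + z' + 1)/2) ((z - z')/2) x"

definition phi2 :: "complex \<Rightarrow> complex \<Rightarrow> real \<Rightarrow> complex" where
  "phi2 z z' x = of_real x powr (-1/2) * whittakerW ((z + z' - 1)/2) ((z - z')/2) x"

definition whittaker_kernel_offdiag :: "complex \<Rightarrow> complex \<Rightarrow> real \<Rightarrow> real \<Rightarrow> complex" where
  "whittaker_kernel_offdiag z z' x y =
     rGamma z * rGamma z' *
     ((phi1 z z' x * phi2 z z' y - phi1 z z' y * phi2 z z' x) / of_real (x - y))"

definition whittaker_kernel :: "complex \<Rightarrow> complex \<Rightarrow> real \<Rightarrow> real \<Rightarrow> complex" where
  "whittaker_kernel z z' x y =
     (if x = y then Lim (at x) (\<lambda>y'. whittaker_kernel_offdiag z z' x y')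
      else whittaker_kernel_offdiag z z' x y)"

definition ratio_raw :: "complex \<Rightarrow> complex \<Rightarrow> real \<Rightarrow> complex" where
  "ratio_raw z z' t =
     (of_real t powr ((z - z')/2) - of_real t powr ((z' - z)/2)) /
     (of_real t powr (1/2) - of_real t powr (-1/2))"

definition ratio_fun :: "complex \<Rightarrow> complex \<Rightarrow> real \<Rightarrow> complex" where
  "ratio_fun z z' t = (if t = 1 then Lim (at 1) (ratio_raw z z') else ratio_raw z z' t)"

definition main_term :: "complex \<Rightarrow> complex \<Rightarrow> real \<Rightarrow> real \<Rightarrow> complex" where
  "main_term z z' x y =
     sin (of_real pi * z) * sin (of_real pi * z') / (of_real pi * sin (of_real pi * (z - z'))) * ratio_fun z z' (x / y)"

definition r_prime :: "complex \<Rightarrow> complex \<Rightarrow> real \<Rightarrow> real \<Rightarrow> complex" where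
  "r_prime z z' x y = of_real (sqrt (x * y)) * whittaker_kernel z z' x y - main_term z z' x y"

end

theory Submission
  imports Defs "HOL-Complex_Analysis.Complex_Analysis"
begin

(*
  Write mu = (z - z')/2.  By the connection formula defining W, x^(-1/2) W_{kappa,mu}(x) equals
  x^mu a(x) + x^(-mu) b(x) with a, b entire (Gamma quotients times e^(-x/2) M(., ., x)).
  Expanding phi1(x) phi2(y) - phi1(y) phi2(x) and freezing a, b at 0 leaves
  c ((x/y)^mu - (y/x)^mu), and the reflection formula turns rGamma z rGamma z' c into
  sin(pi z) sin(pi z') / (pi sin(pi (z - z'))): after multiplication by sqrt(xy)/(x - y) this is
  the main term.  Every other term either vanishes to first order on the diagonal x = y, or is
  (x/y)^mu - (y/x)^mu = O(|x - y| / sqrt(xy)) (this uses |Re mu| <= 1/2) times a factor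
  O(max(x,y)); both kinds are O(max(x,y)^(1 - 2 |Re mu|)).  On the diagonal the bound follows
  by continuity.
*)

lemma of_real_powr_eq_exp: "0 < x \<Longrightarrow> (of_real x :: complex) powr c = exp (c * of_real (ln x))"
  by (simp add: powr_def Ln_of_real)

lemma norm_of_real_powr: "0 \<le> x \<Longrightarrow> norm ((of_real x :: complex) powr c) = x powr Re c"
  by (simp add: norm_powr_real_powr)

lemma of_real_powr_half: "0 \<le> x \<Longrightarrow> (of_real x :: complex) powr (1/2) = of_real (sqrt x)"
  using powr_of_real[of x "1/2"] by (simp add: powr_half_sqrt)

lemma of_real_powr_minus_half: "0 \<le> x \<Longrightarrow> (of_real x :: complex) powr (-1/2) = of_real (1 / sqrt x)"
proof -
  assume "0 \<le> x"
  have "(of_real x :: complex) powr (-1/2) = inverse (of_real x powr (1/2))"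
    unfolding powr_minus[symmetric] by simp
  also have "\<dots> = of_real (1 / sqrt x)"
    unfolding of_real_powr_half[OF \<open>0 \<le> x\<close>] by (simp add: divide_inverse)
  finally show ?thesis .
qed

lemma of_real_divide_powr:
  "0 < x \<Longrightarrow> 0 < y \<Longrightarrow> (of_real (x / y) :: complex) powr c = of_real x powr c / of_real y powr c"
  by (simp add: of_real_powr_eq_exp ln_div right_diff_distrib exp_diff del: of_real_divide)

lemma sqrt_sub_inverse_sqrt: "0 < t \<Longrightarrow> sqrt t - 1 / sqrt t = (t - 1) / sqrt t"
  by (simp add: diff_divide_distrib real_div_sqrt)

lemma holomorphic_on_lipschitz_on:
  assumes "f holomorphic_on S" "open S" "compact K" "convex K" "K \<subseteq> S"
  obtains L where "L-lipschitz_on K f"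
proof -
  have "deriv f holomorphic_on S" using assms by (intro holomorphic_deriv)
  then have "continuous_on K (deriv f)"
    using assms holomorphic_on_imp_continuous_on continuous_on_subset by blast
  then have "bounded (deriv f ` K)" using assms compact_continuous_image compact_imp_bounded by blast
  then obtain B where B: "\<And>w. w \<in> K \<Longrightarrow> norm (deriv f w) \<le> B"
    by (auto simp: bounded_iff)
  have "(max B 0)-lipschitz_on K f"
  proof (rule lipschitz_onI)
    fix a b assume ab: "a \<in> K" "b \<in> K"
    show "dist (f a) (f b) \<le> max B 0 * dist a b"
      unfolding dist_norm
    proof (rule field_differentiable_bound[OF assms(4)])
      fix w assume w: "w \<in> K"
      show "(f has_field_derivative deriv f w) (at w within K)"
        using holomorphic_derivI[OF assms(1,2)] w assms(5) by (meson has_field_derivative_at_within subsetD)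
      show "norm (deriv f w) \<le> max B 0" using B[OF w] by simp
    qed (use ab in auto)
  qed simp
  then show thesis by (rule that)
qed

lemma holomorphic_on_lipschitz_on_real_interval:
  assumes "f holomorphic_on S" "open S" "of_real ` {a..b} \<subseteq> S"
  obtains L where "L-lipschitz_on {a..b} (\<lambda>x. f (of_real x))"
proof -
  have "compact (of_real ` {a..b} :: complex set)"
    by (intro compact_continuous_image continuous_intros) auto
  moreover have "convex (of_real ` {a..b} :: complex set)"
    by (intro convex_linear_image bounded_linear.linear[OF bounded_linear_of_real]) auto
  ultimately obtain L where "L-lipschitz_on (of_real ` {a..b}) f"
    using holomorphic_on_lipschitz_on[OF assms(1,2) _ _ assms(3)] by blast
  moreover have "1-lipschitz_on {a..b} (of_real :: real \<Rightarrow> complex)"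
    by (rule lipschitz_onI) auto
  ultimately have "(L * 1)-lipschitz_on {a..b} (f \<circ> of_real)"
    by (intro lipschitz_on_compose)
  then show thesis by (intro that) (simp add: o_def)
qed

lemma summable_kummerM_series:
  fixes a b w :: complex
  shows "summable (\<lambda>n. pochhammer a n / (pochhammer b n * fact n) * w ^ n)"
proof (rule summable_ratio_test[of "1/2" "nat \<lceil>norm a + 2 * norm b + 8 * norm w + 1\<rceil>"])
  fix n assume "n \<ge> nat \<lceil>norm a + 2 * norm b + 8 * norm w + 1\<rceil>"
  then have n: "real n \<ge> norm a + 2 * norm b + 8 * norm w + 1" by linarith
  then have n_pos: "real n > 0" by (smt (verit) norm_ge_zero)
  define q where "q = (a + of_nat n) * w / ((b + of_nat n) * of_nat (Suc n))"
  have step: "pochhammer a (Suc n) / (pochhammer b (Suc n) * fact (Suc n)) * w ^ Suc n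
      = (pochhammer a n / (pochhammer b n * fact n) * w ^ n) * q"
    by (simp add: q_def pochhammer_Suc field_simps)
  have "norm (a + of_nat n) \<le> norm a + real n"
    using norm_triangle_ineq[of a "of_nat n"] by simp
  then have num: "norm (a + of_nat n) \<le> 2 * real n"
    using n norm_ge_zero[of b] norm_ge_zero[of w] by linarith
  have "real n - norm b \<le> norm (b + of_nat n)"
    using norm_triangle_ineq2[of "of_nat n" "-b"] by (simp add: add.commute)
  then have den: "real n / 2 \<le> norm (b + of_nat n)"
    using n norm_ge_zero[of a] norm_ge_zero[of w] by linarith
  have "norm q = norm (a + of_nat n) * norm w / (norm (b + of_nat n) * (real n + 1))"
    unfolding q_def by (simp only: norm_mult norm_divide norm_of_nat) simp
  also have "\<dots> \<le> (2 * real n) * norm w / ((real n / 2) * (real n + 1))"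
    by (intro frac_le mult_mono num den mult_right_mono) (use n_pos in auto)
  also have "\<dots> = 4 * norm w / (real n + 1)"
    using n_pos by (simp add: divide_simps; simp add: algebra_simps)
  also have "\<dots> \<le> 1/2"
  proof -
    have "8 * norm w \<le> real n + 1" using n norm_ge_zero[of a] norm_ge_zero[of b] by linarith
    then show ?thesis by (simp add: field_simps)
  qed
  finally have "norm q \<le> 1/2" .
  then show "norm (pochhammer a (Suc n) / (pochhammer b (Suc n) * fact (Suc n)) * w ^ Suc n)
      \<le> 1/2 * norm (pochhammer a n / (pochhammer b n * fact n) * w ^ n)"
    unfolding step norm_mult[of _ q]
    using mult_left_mono[of "norm q" "1/2" "norm (pochhammer a n / (pochhammer b n * fact n) * w ^ n)"]
    by (simp add: mult.commute)
qed simp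

lemma kummerM_holomorphic [holomorphic_intros]: "kummerM a b holomorphic_on S"
proof -
  have "kummerM a b field_differentiable at w" for w
    unfolding kummerM_def[abs_def] field_differentiable_def
    using termdiffs_strong_converges_everywhere[OF summable_kummerM_series] by blast
  then show ?thesis by (simp add: holomorphic_on_def field_differentiable_at_within)
qed

lemma kummerM_0 [simp]: "kummerM a b 0 = 1"
  unfolding kummerM_def powser_zero by simp

definition whittakerW_part :: "complex \<Rightarrow> complex \<Rightarrow> complex \<Rightarrow> complex" where
  "whittakerW_part \<kappa> \<mu> w =
     Gamma (-2*\<mu>) * rGamma (1/2 - \<mu> - \<kappa>) * exp (- w / 2) * kummerM (1/2 + \<mu> - \<kappa>) (1 + 2*\<mu>) w"

definition whittakerW_reduced :: "complex \<Rightarrow> complex \<Rightarrow> complex \<Rightarrow> complex" where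
  "whittakerW_reduced \<kappa> \<mu> w = w powr \<mu> * whittakerW_part \<kappa> \<mu> w + w powr (-\<mu>) * whittakerW_part \<kappa> (-\<mu>) w"

lemma whittakerW_part_holomorphic [holomorphic_intros]: "whittakerW_part \<kappa> \<mu> holomorphic_on S"
  unfolding whittakerW_part_def by (intro holomorphic_intros) simp

lemma whittakerW_part_0: "whittakerW_part \<kappa> \<mu> 0 = Gamma (-2*\<mu>) * rGamma (1/2 - \<mu> - \<kappa>)"
  by (simp add: whittakerW_part_def)

lemma lipschitz_on_whittakerW_part:
  obtains L where "L-lipschitz_on {a..b} (\<lambda>x. whittakerW_part \<kappa> \<mu> (of_real x))"
  using holomorphic_on_lipschitz_on_real_interval[OF whittakerW_part_holomorphic open_UNIV] by blast

lemma whittakerW_reduced_of_real: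
  assumes "0 < x"
  shows "of_real x powr (-1/2) * whittakerW \<kappa> \<mu> x = whittakerW_reduced \<kappa> \<mu> (of_real x)"
proof -
  have e1: "(of_real x :: complex) powr (-1/2) * of_real x powr (\<mu> + 1/2) = of_real x powr \<mu>"
   and e2: "(of_real x :: complex) powr (-1/2) * of_real x powr (-\<mu> + 1/2) = of_real x powr (-\<mu>)"
    by (simp_all flip: powr_add)
  have k: "1/2 + - \<mu> - \<kappa> = 1/2 - \<mu> - \<kappa>" "1 + 2 * - \<mu> = 1 - 2*\<mu>" "-2 * - \<mu> = 2 * \<mu>"
    "1/2 - - \<mu> - \<kappa> = 1/2 + \<mu> - \<kappa>" by simp_all
  show ?thesis
    unfolding whittakerW_def whittakerM_def whittakerW_reduced_def whittakerW_part_def k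
      e1[symmetric] e2[symmetric]
    by (simp only: distrib_left distrib_right mult_ac)
qed

lemma holomorphic_on_whittakerW_reduced:
  "whittakerW_reduced \<kappa> \<mu> holomorphic_on {w. 0 < Re w}"
  unfolding whittakerW_reduced_def
  by (intro holomorphic_intros) (auto simp: complex_nonpos_Reals_iff)

lemma norm_of_real_powr_le_max:
  assumes "\<bar>Re \<mu>\<bar> \<le> 1/2" "0 < t"
  shows "norm ((of_real t :: complex) powr \<mu>) \<le> max t 1 / sqrt t"
proof (cases "1 \<le> t")
  case True
  then have "t powr Re \<mu> \<le> t powr (1/2)" using assms by (intro powr_mono) auto
  also have "\<dots> = t / sqrt t" using assms(2) by (simp add: powr_half_sqrt real_div_sqrt)
  finally show ?thesis using True assms(2) by (simp add: norm_of_real_powr)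
next
  case False
  then have "t powr Re \<mu> \<le> t powr (-1/2)" using assms by (intro powr_mono') auto
  also have "\<dots> = 1 / sqrt t" using assms(2) by (simp add: powr_minus_divide powr_half_sqrt)
  finally show ?thesis using False assms(2) by (simp add: norm_of_real_powr)
qed

(* Away from t = 1 both sides are comparable to max t 1 / sqrt t; near t = 1 the holomorphic
   function w powr mu - w powr -mu is Lipschitz and vanishes at 1. *)
lemma norm_powr_sub_powr_uminus_le:
  fixes \<mu> :: complex
  assumes "\<bar>Re \<mu>\<bar> \<le> 1/2"
  obtains R where "0 \<le> R"
    "\<And>t. 0 < t \<Longrightarrow> norm (of_real t powr \<mu> - of_real t powr (-\<mu>)) \<le> R * (\<bar>t - 1\<bar> / sqrt t)"
proof -
  define h where "h = (\<lambda>w::complex. w powr \<mu> - w powr (-\<mu>))"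
  have "h holomorphic_on {w. 0 < Re w}"
    unfolding h_def by (intro holomorphic_intros) (auto simp: complex_nonpos_Reals_iff)
  moreover have "of_real ` {1/2..2} \<subseteq> {w::complex. 0 < Re w}" by auto
  ultimately obtain L where L: "L-lipschitz_on {1/2..2} (\<lambda>t. h (of_real t))"
    using holomorphic_on_lipschitz_on_real_interval open_halfspace_Re_gt by blast
  have L0: "0 \<le> L" using L by (rule lipschitz_on_nonneg)
  have "norm (h (of_real t)) \<le> (4 + 2 * L) * (\<bar>t - 1\<bar> / sqrt t)" if t: "0 < t" for t
  proof (cases "1/2 \<le> t \<and> t \<le> 2")
    case True
    have "norm (h (of_real t)) = norm (h (of_real t) - h (of_real 1))" by (simp add: h_def)
    also have "\<dots> \<le> L * \<bar>t - 1\<bar>"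
      using lipschitz_on_normD[OF L, of t 1] True by simp
    also have "\<dots> \<le> 2 * L * (\<bar>t - 1\<bar> / sqrt t)"
    proof -
      have "sqrt t \<le> 2" using True real_sqrt_le_mono[of t 4] by simp
      then have "sqrt t * \<bar>t - 1\<bar> \<le> 2 * \<bar>t - 1\<bar>" by (intro mult_right_mono) auto
      then have "\<bar>t - 1\<bar> \<le> 2 * (\<bar>t - 1\<bar> / sqrt t)"
        using t by (simp add: field_simps)
      from mult_left_mono[OF this L0] show ?thesis by (simp add: mult_ac)
    qed
    also have "\<dots> \<le> (4 + 2 * L) * (\<bar>t - 1\<bar> / sqrt t)"
      using t by (intro mult_right_mono) auto
    finally show ?thesis .
  next
    case False
    have "norm (h (of_real t)) \<le> max t 1 / sqrt t + max t 1 / sqrt t"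
      unfolding h_def using norm_of_real_powr_le_max[OF _ t, of \<mu>] norm_of_real_powr_le_max[OF _ t, of "-\<mu>"] assms
      by (intro order_trans[OF norm_triangle_ineq4] add_mono) auto
    also have "\<dots> \<le> 4 * (\<bar>t - 1\<bar> / sqrt t)"
    proof -
      have "max t 1 \<le> 2 * \<bar>t - 1\<bar>" using False by auto
      then show ?thesis using t by (simp add: field_simps)
    qed
    also have "\<dots> \<le> (4 + 2 * L) * (\<bar>t - 1\<bar> / sqrt t)"
      using t L0 by (intro mult_right_mono) auto
    finally show ?thesis .
  qed
  then show thesis using L0 by (intro that[of "4 + 2 * L"]) (auto simp: h_def)
qed

lemma norm_mult_sub_mult_le:
  fixes f g :: "'a::metric_space \<Rightarrow> 'b::real_normed_algebra"
  assumes "L-lipschitz_on S f" "L-lipschitz_on S g"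
    and "\<And>x. x \<in> S \<Longrightarrow> norm (f x) \<le> B" "\<And>x. x \<in> S \<Longrightarrow> norm (g x) \<le> B"
    and "x \<in> S" "y \<in> S" "x' \<in> S" "y' \<in> S"
  shows "norm (f x * g y - f x' * g y') \<le> L * B * (dist x x' + dist y y')"
proof -
  have "f x * g y - f x' * g y' = (f x - f x') * g y + f x' * (g y - g y')"
    by (simp add: algebra_simps)
  then have "norm (f x * g y - f x' * g y') \<le> norm (f x - f x') * norm (g y) + norm (f x') * norm (g y - g y')"
    by (metis norm_mult_ineq norm_triangle_le add_mono)
  also have "\<dots> \<le> (L * dist x x') * B + B * (L * dist y y')"
    using assms lipschitz_onD[OF assms(1), of x x'] lipschitz_onD[OF assms(2), of y y'] lipschitz_on_nonneg[OF assms(1)]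
      order_trans[OF norm_ge_zero assms(3)[OF assms(5)]]
    by (intro add_mono mult_mono) (auto simp: dist_norm)
  also have "\<dots> = L * B * (dist x x' + dist y y')" by (simp add: algebra_simps)
  finally show ?thesis .
qed

lemma sqrt_mult_powr_le:
  fixes x y M \<alpha> \<beta> e :: real
  assumes "0 < x" "0 < y" "x \<le> M" "y \<le> M" "M \<le> 1" "-1/2 \<le> \<alpha>" "-1/2 \<le> \<beta>" "e \<le> 1 + \<alpha> + \<beta>"
  shows "sqrt (x * y) * (x powr \<alpha> * y powr \<beta>) \<le> M powr e"
proof -
  have "sqrt (x * y) * (x powr \<alpha> * y powr \<beta>) = x powr (1/2 + \<alpha>) * y powr (1/2 + \<beta>)"
    using assms(1,2) by (simp add: powr_add powr_half_sqrt real_sqrt_mult)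
  also have "\<dots> \<le> M powr (1/2 + \<alpha>) * M powr (1/2 + \<beta>)"
    using assms by (intro mult_mono powr_mono2) auto
  also have "\<dots> = M powr (1 + \<alpha> + \<beta>)" by (simp add: powr_add [symmetric] add_ac)
  also have "\<dots> \<le> M powr e" using assms by (intro powr_mono') auto
  finally show ?thesis .
qed

lemma norm_sqrt_divided_difference_weight_le:
  fixes x y M K \<alpha> \<beta> e :: real and P D :: complex
  assumes "0 < x" "0 < y" "x \<noteq> y" "x \<le> M" "y \<le> M" "M \<le> 1"
    and "norm P = x powr \<alpha> * y powr \<beta>" "-1/2 \<le> \<alpha>" "-1/2 \<le> \<beta>" "e \<le> 1 + \<alpha> + \<beta>"
    and "norm D \<le> K * \<bar>x - y\<bar>"
  shows "norm (of_real (sqrt (x * y) / (x - y)) * (P * D)) \<le> K * M powr e"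
proof -
  have xy: "0 < \<bar>x - y\<bar>" using assms(3) by simp
  then have K: "0 \<le> K" using assms(11) by (smt (verit) norm_ge_zero zero_le_mult_iff)
  have "norm (of_real (sqrt (x * y) / (x - y)) * (P * D))
      = sqrt (x * y) / \<bar>x - y\<bar> * (x powr \<alpha> * y powr \<beta>) * norm D"
    unfolding norm_mult norm_of_real abs_divide using assms(1,2,7) by simp
  also have "\<dots> \<le> sqrt (x * y) / \<bar>x - y\<bar> * (x powr \<alpha> * y powr \<beta>) * (K * \<bar>x - y\<bar>)"
    using assms(1,2,11) by (intro mult_left_mono) auto
  also have "\<dots> = K * (sqrt (x * y) * (x powr \<alpha> * y powr \<beta>))" using xy by (simp add: field_simps)
  also have "\<dots> \<le> K * M powr e"
    using assms K by (intro mult_left_mono sqrt_mult_powr_le) auto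
  finally show ?thesis .
qed

lemma norm_sqrt_divided_difference_small_le:
  fixes x y M K R e :: real and W H :: complex
  assumes "0 < x" "0 < y" "x \<noteq> y" "0 < M" "M \<le> 1" "e \<le> 1" "0 \<le> R"
    and "norm W \<le> R * (\<bar>x - y\<bar> / sqrt (x * y))" "norm H \<le> K * M"
  shows "norm (of_real (sqrt (x * y) / (x - y)) * (W * H)) \<le> R * K * M powr e"
proof -
  have xy: "0 < \<bar>x - y\<bar>" and s: "0 < sqrt (x * y)" using assms by auto
  have K: "0 \<le> K" using assms(4,9) by (smt (verit) norm_ge_zero zero_le_mult_iff)
  have "norm (of_real (sqrt (x * y) / (x - y)) * (W * H)) = (sqrt (x * y) / \<bar>x - y\<bar> * norm W) * norm H"
    unfolding norm_mult norm_of_real abs_divide using s by simp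
  also have "\<dots> \<le> (sqrt (x * y) / \<bar>x - y\<bar> * (R * (\<bar>x - y\<bar> / sqrt (x * y)))) * (K * M)"
    using assms s xy by (intro mult_mono mult_left_mono) auto
  also have "\<dots> = R * K * M" using xy s assms(1,2) by (simp add: field_simps)
  also have "\<dots> \<le> R * K * M powr e"
    using assms K powr_mono'[of e 1 M] by (intro mult_left_mono) auto
  finally show ?thesis .
qed

lemma norm_powr_cross_diff_le:
  fixes \<mu> :: complex
  assumes "\<bar>Re \<mu>\<bar> \<le> 1/2"
  obtains R where "0 \<le> R" "\<And>x y. 0 < x \<Longrightarrow> 0 < y \<Longrightarrow>
    norm (of_real x powr \<mu> * of_real y powr (-\<mu>) - of_real x powr (-\<mu>) * of_real y powr \<mu>)
      \<le> R * (\<bar>x - y\<bar> / sqrt (x * y))"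
proof -
  obtain R where R: "0 \<le> R"
    "\<And>t. 0 < t \<Longrightarrow> norm (of_real t powr \<mu> - of_real t powr (-\<mu>)) \<le> R * (\<bar>t - 1\<bar> / sqrt t)"
    using norm_powr_sub_powr_uminus_le[OF assms] by blast
  have "norm (of_real x powr \<mu> * of_real y powr (-\<mu>) - of_real x powr (-\<mu>) * of_real y powr \<mu>)
      \<le> R * (\<bar>x - y\<bar> / sqrt (x * y))" if x: "0 < x" and y: "0 < y" for x y
  proof -
    have "(of_real (x / y) :: complex) powr c = of_real x powr c * of_real y powr (-c)" for c
      by (subst of_real_divide_powr[OF x y]) (simp only: powr_minus divide_inverse)
    then have "norm (of_real x powr \<mu> * of_real y powr (-\<mu>) - of_real x powr (-\<mu>) * of_real y powr \<mu>)
        = norm (of_real (x / y) powr \<mu> - of_real (x / y) powr (-\<mu>))"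
      by (simp only: minus_minus)
    also have "\<dots> \<le> R * (\<bar>x / y - 1\<bar> / sqrt (x / y))"
      using x y by (intro R(2)) simp
    also have "\<bar>x / y - 1\<bar> / sqrt (x / y) = \<bar>x - y\<bar> / sqrt (x * y)"
      using x y by (simp add: field_simps real_sqrt_divide real_sqrt_mult)
    finally show ?thesis .
  qed
  with R(1) show thesis by (rule that)
qed

lemma wronskian_factor_bounds:
  fixes a1 b1 a2 b2 :: "real \<Rightarrow> 'a::real_normed_algebra"
  assumes lip: "\<And>f. f \<in> {a1, b1, a2, b2} \<Longrightarrow> L-lipschitz_on {0..1} f"
    and x: "x \<in> {0..1}" and y: "y \<in> {0..1}"
  defines "K \<equiv> 4 * L * (L + (norm (a1 0) + norm (b1 0) + norm (a2 0) + norm (b2 0)))"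
  shows "norm (a1 x * a2 y - a1 y * a2 x) \<le> K * \<bar>x - y\<bar>"
    and "norm (b1 x * b2 y - b1 y * b2 x) \<le> K * \<bar>x - y\<bar>"
    and "norm ((a1 x * b2 y - a1 y * b2 x) - (b1 y * a2 x - b1 x * a2 y)) \<le> K * \<bar>x - y\<bar>"
    and "norm ((a1 x * b2 y - a1 0 * b2 0) - (b1 y * a2 x - b1 0 * a2 0)) \<le> K * max x y"
proof -
  define B where "B = L + (norm (a1 0) + norm (b1 0) + norm (a2 0) + norm (b2 0))"
  have L: "0 \<le> L" using lip[of a1] lipschitz_on_nonneg by simp
  have bound: "norm (f t) \<le> B" if "f \<in> {a1, b1, a2, b2}" "t \<in> {0..1}" for f t
  proof -
    have "norm (f t) \<le> norm (f 0) + L * dist t 0"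
      using lipschitz_onD[OF lip[OF that(1)] that(2), of 0] norm_triangle_ineq2[of "f t" "f 0"]
      by (simp add: dist_norm)
    moreover have "L * dist t 0 \<le> L" using that(2) L by (simp add: dist_real_def mult_left_le)
    moreover have "norm (f 0) \<le> norm (a1 0) + norm (b1 0) + norm (a2 0) + norm (b2 0)"
      using that(1) by auto
    ultimately show ?thesis by (simp add: B_def)
  qed
  define c where "c = L * B"
  have K: "K = 4 * c" by (simp add: K_def c_def B_def)
  have c: "0 \<le> c"
    using L order_trans[OF norm_ge_zero bound[of a1 0]] by (simp add: c_def)
  have prod: "norm (f s * g t - f s' * g t') \<le> c * \<bar>s - s'\<bar> + c * \<bar>t - t'\<bar>"
    if "f \<in> {a1, b1, a2, b2}" "g \<in> {a1, b1, a2, b2}" "s \<in> {0..1}" "t \<in> {0..1}" "s' \<in> {0..1}" "t' \<in> {0..1}"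
    for f g s t s' t'
    using norm_mult_sub_mult_le[OF lip[OF that(1)] lip[OF that(2)] bound[OF that(1)] bound[OF that(2)] that(3-6)]
    by (simp only: dist_real_def c_def distrib_left)
  have "norm ((a1 x * b2 y - a1 y * b2 x) - (b1 y * a2 x - b1 x * a2 y))
      \<le> norm (a1 x * b2 y - a1 y * b2 x) + norm (b1 y * a2 x - b1 x * a2 y)"
    "norm ((a1 x * b2 y - a1 0 * b2 0) - (b1 y * a2 x - b1 0 * a2 0))
      \<le> norm (a1 x * b2 y - a1 0 * b2 0) + norm (b1 y * a2 x - b1 0 * a2 0)"
    by (rule norm_triangle_ineq4)+
  moreover have "c * (x + y) \<le> c * (2 * max x y)" using c by (intro mult_left_mono) auto
  moreover have "0 \<le> c * \<bar>x - y\<bar>" "c * \<bar>y - x\<bar> = c * \<bar>x - y\<bar>" "c * \<bar>x - 0\<bar> = c * x"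
      "c * \<bar>y - 0\<bar> = c * y" "c * (x + y) = c * x + c * y" "c * (2 * max x y) = 2 * (c * max x y)"
    using c x y by (simp_all add: abs_minus_commute distrib_left)
  moreover have "a1 \<in> {a1, b1, a2, b2}" "b1 \<in> {a1, b1, a2, b2}" "a2 \<in> {a1, b1, a2, b2}"
      "b2 \<in> {a1, b1, a2, b2}" "0 \<in> {0..1::real}" by simp_all
  moreover note prod[OF \<open>a1 \<in> _\<close> \<open>a2 \<in> _\<close> x y y x] prod[OF \<open>b1 \<in> _\<close> \<open>b2 \<in> _\<close> x y y x]
    prod[OF \<open>a1 \<in> _\<close> \<open>b2 \<in> _\<close> x y y x] prod[OF \<open>b1 \<in> _\<close> \<open>a2 \<in> _\<close> y x x y]
    prod[OF \<open>a1 \<in> _\<close> \<open>b2 \<in> _\<close> x y \<open>0 \<in> _\<close> \<open>0 \<in> _\<close>]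
    prod[OF \<open>b1 \<in> _\<close> \<open>a2 \<in> _\<close> y x \<open>0 \<in> _\<close> \<open>0 \<in> _\<close>]
  moreover have "4 * c * \<bar>x - y\<bar> = 4 * (c * \<bar>x - y\<bar>)" "4 * c * max x y = 4 * (c * max x y)" by simp_all
  ultimately show "norm (a1 x * a2 y - a1 y * a2 x) \<le> K * \<bar>x - y\<bar>"
    "norm (b1 x * b2 y - b1 y * b2 x) \<le> K * \<bar>x - y\<bar>"
    "norm ((a1 x * b2 y - a1 y * b2 x) - (b1 y * a2 x - b1 x * a2 y)) \<le> K * \<bar>x - y\<bar>"
    "norm ((a1 x * b2 y - a1 0 * b2 0) - (b1 y * a2 x - b1 0 * a2 0)) \<le> K * max x y"
    unfolding K by linarith+
qed

(* The first three terms vanish on the diagonal x = y; in the last one the second factor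
   vanishes at x = y = 0. *)
lemma wronskian_decomposition:
  fixes px qx py qy a1x a1y a10 b1x b1y b10 a2x a2y a20 b2x b2y b20 :: "'a::comm_ring"
  shows "(px * a1x + qx * b1x) * (py * a2y + qy * b2y) - (py * a1y + qy * b1y) * (px * a2x + qx * b2x)
      - (a10 * b20 - b10 * a20) * (px * qy - qx * py)
    = px * py * (a1x * a2y - a1y * a2x) + qx * qy * (b1x * b2y - b1y * b2x)
      + qx * py * ((a1x * b2y - a1y * b2x) - (b1y * a2x - b1x * a2y))
      + (px * qy - qx * py) * ((a1x * b2y - a10 * b20) - (b1y * a2x - b10 * a20))"
  by (simp add: algebra_simps)

lemma wronskian_remainder_bound:
  fixes \<mu> :: complex and a1 b1 a2 b2 :: "real \<Rightarrow> complex"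
  assumes \<mu>: "\<bar>Re \<mu>\<bar> \<le> 1/2"
    and lip: "\<And>f. f \<in> {a1, b1, a2, b2} \<Longrightarrow> L-lipschitz_on {0..1} f"
  defines "\<Phi>1 \<equiv> \<lambda>x. of_real x powr \<mu> * a1 x + of_real x powr (-\<mu>) * b1 x"
    and "\<Phi>2 \<equiv> \<lambda>x. of_real x powr \<mu> * a2 x + of_real x powr (-\<mu>) * b2 x"
  obtains C where "\<And>x y. 0 < x \<Longrightarrow> x \<le> 1 \<Longrightarrow> 0 < y \<Longrightarrow> y \<le> 1 \<Longrightarrow> x \<noteq> y \<Longrightarrow>
    norm (of_real (sqrt (x * y) / (x - y)) * (\<Phi>1 x * \<Phi>2 y - \<Phi>1 y * \<Phi>2 x
      - (a1 0 * b2 0 - b1 0 * a2 0)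
        * (of_real x powr \<mu> * of_real y powr (-\<mu>) - of_real x powr (-\<mu>) * of_real y powr \<mu>)))
    \<le> C * max x y powr (1 - 2 * \<bar>Re \<mu>\<bar>)"
proof -
  define K where "K = 4 * L * (L + (norm (a1 0) + norm (b1 0) + norm (a2 0) + norm (b2 0)))"
  note K = wronskian_factor_bounds[of a1 b1 a2 b2 L, OF lip, folded K_def]
  obtain R where R: "0 \<le> R" "\<And>x y. 0 < x \<Longrightarrow> 0 < y \<Longrightarrow>
      norm (of_real x powr \<mu> * of_real y powr (-\<mu>) - of_real x powr (-\<mu>) * of_real y powr \<mu>)
        \<le> R * (\<bar>x - y\<bar> / sqrt (x * y))"
    using norm_powr_cross_diff_le[OF \<mu>] by blast
  define \<rho> where "\<rho> = Re \<mu>"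
  define e where "e = 1 - 2 * \<bar>\<rho>\<bar>"
  show thesis
  proof (rule that[of "3 * K + R * K"])
    fix x y :: real assume x: "0 < x" "x \<le> 1" and y: "0 < y" "y \<le> 1" and xy: "x \<noteq> y"
    define M where "M = max x y"
    have M: "x \<le> M" "y \<le> M" "0 < M" "M \<le> 1" using x y by (auto simp: M_def)
    have D: "norm (a1 x * a2 y - a1 y * a2 x) \<le> K * \<bar>x - y\<bar>"
        "norm (b1 x * b2 y - b1 y * b2 x) \<le> K * \<bar>x - y\<bar>"
        "norm ((a1 x * b2 y - a1 y * b2 x) - (b1 y * a2 x - b1 x * a2 y)) \<le> K * \<bar>x - y\<bar>"
        "norm ((a1 x * b2 y - a1 0 * b2 0) - (b1 y * a2 x - b1 0 * a2 0)) \<le> K * M"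
      using K[where x = x and y = y] x y by (auto simp: M_def)
    define u where "u = (of_real (sqrt (x * y) / (x - y)) :: complex)"
    define px where "px = (of_real x :: complex) powr \<mu>"
    define py where "py = (of_real y :: complex) powr \<mu>"
    define qx where "qx = (of_real x :: complex) powr (-\<mu>)"
    define qy where "qy = (of_real y :: complex) powr (-\<mu>)"
    have norms: "norm px = x powr \<rho>" "norm qx = x powr (-\<rho>)" "norm py = y powr \<rho>" "norm qy = y powr (-\<rho>)"
      using x y by (simp_all add: px_def qx_def py_def qy_def \<rho>_def norm_of_real_powr)
    have exps: "-1/2 \<le> \<rho>" "-1/2 \<le> -\<rho>" "e \<le> 1 + \<rho> + \<rho>" "e \<le> 1 + -\<rho> + -\<rho>" "e \<le> 1 + -\<rho> + \<rho>" "e \<le> 1"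
      using \<mu> by (auto simp: e_def \<rho>_def)
    have T1: "norm (u * (px * py * (a1 x * a2 y - a1 y * a2 x))) \<le> K * M powr e"
      unfolding u_def using exps
      by (intro norm_sqrt_divided_difference_weight_le[where \<alpha>="\<rho>" and \<beta>="\<rho>", OF x(1) y(1) xy M(1,2,4) _ _ _ _ D(1)])
         (auto simp: norm_mult norms)
    have T2: "norm (u * (qx * qy * (b1 x * b2 y - b1 y * b2 x))) \<le> K * M powr e"
      unfolding u_def using exps
      by (intro norm_sqrt_divided_difference_weight_le[where \<alpha>="-\<rho>" and \<beta>="-\<rho>", OF x(1) y(1) xy M(1,2,4) _ _ _ _ D(2)])
         (auto simp: norm_mult norms)
    have T3: "norm (u * (qx * py * ((a1 x * b2 y - a1 y * b2 x) - (b1 y * a2 x - b1 x * a2 y)))) \<le> K * M powr e"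
      unfolding u_def using exps
      by (intro norm_sqrt_divided_difference_weight_le[where \<alpha>="-\<rho>" and \<beta>="\<rho>", OF x(1) y(1) xy M(1,2,4) _ _ _ _ D(3)])
         (auto simp: norm_mult norms)
    have T4: "norm (u * ((px * qy - qx * py) * ((a1 x * b2 y - a1 0 * b2 0) - (b1 y * a2 x - b1 0 * a2 0))))
        \<le> R * K * M powr e"
      unfolding u_def px_def py_def qx_def qy_def
      by (rule norm_sqrt_divided_difference_small_le[OF x(1) y(1) xy M(3,4) exps(6) R(1) R(2)[OF x(1) y(1)] D(4)])
    have "norm (u * (\<Phi>1 x * \<Phi>2 y - \<Phi>1 y * \<Phi>2 x - (a1 0 * b2 0 - b1 0 * a2 0) * (px * qy - qx * py)))
        \<le> K * M powr e + K * M powr e + K * M powr e + R * K * M powr e"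
      unfolding \<Phi>1_def \<Phi>2_def px_def py_def qx_def qy_def wronskian_decomposition
      unfolding px_def[symmetric] py_def[symmetric] qx_def[symmetric] qy_def[symmetric] distrib_left[of u]
      by (intro order_trans[OF norm_triangle_ineq] add_mono T1 T2 T3 T4)
    also have "\<dots> = (3 * K + R * K) * M powr e" by (simp add: algebra_simps)
    finally show "norm (of_real (sqrt (x * y) / (x - y)) * (\<Phi>1 x * \<Phi>2 y - \<Phi>1 y * \<Phi>2 x
        - (a1 0 * b2 0 - b1 0 * a2 0)
          * (of_real x powr \<mu> * of_real y powr (-\<mu>) - of_real x powr (-\<mu>) * of_real y powr \<mu>)))
      \<le> (3 * K + R * K) * max x y powr (1 - 2 * \<bar>Re \<mu>\<bar>)"
      unfolding u_def px_def py_def qx_def qy_def M_def e_def \<rho>_def .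
  qed
qed

lemma phi1_eq_whittakerW_reduced:
  "0 < x \<Longrightarrow> phi1 z z' x = whittakerW_reduced ((z + z' + 1)/2) ((z - z')/2) (of_real x)"
  unfolding phi1_def by (rule whittakerW_reduced_of_real)

lemma phi2_eq_whittakerW_reduced:
  "0 < x \<Longrightarrow> phi2 z z' x = whittakerW_reduced ((z + z' - 1)/2) ((z - z')/2) (of_real x)"
  unfolding phi2_def by (rule whittakerW_reduced_of_real)

lemma ratio_raw_divide:
  assumes x: "0 < x" and y: "0 < y" and xy: "x \<noteq> y"
  shows "ratio_raw z z' (x / y) = of_real (sqrt (x * y) / (x - y)) *
    (of_real x powr ((z - z')/2) * of_real y powr (-((z - z')/2))
     - of_real x powr (-((z - z')/2)) * of_real y powr ((z - z')/2))"
proof -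
  have xy': "0 < x / y" using x y by simp
  have sqrt_eq: "sqrt (x / y) - 1 / sqrt (x / y) = (x - y) / sqrt (x * y)"
  proof -
    have "sqrt (x / y) - 1 / sqrt (x / y) = sqrt x / sqrt y - sqrt y / sqrt x"
      by (simp add: real_sqrt_divide)
    also have "\<dots> = (sqrt x * sqrt x - sqrt y * sqrt y) / (sqrt x * sqrt y)"
      using x y by (simp add: field_simps)
    also have "\<dots> = (x - y) / sqrt (x * y)" using x y by (simp add: real_sqrt_mult)
    finally show ?thesis .
  qed
  have den: "(of_real (x / y) :: complex) powr (1/2) - of_real (x / y) powr (-1/2)
      = inverse (of_real (sqrt (x * y) / (x - y)))"
    unfolding of_real_powr_half[OF less_imp_le[OF xy']] of_real_powr_minus_half[OF less_imp_le[OF xy']]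
      of_real_diff[symmetric] sqrt_eq of_real_inverse[symmetric] inverse_divide ..
  have num: "(of_real (x / y) :: complex) powr c = of_real x powr c * of_real y powr (-c)" for c
    by (subst of_real_divide_powr[OF x y]) (simp only: powr_minus divide_inverse)
  have "(z' - z)/2 = -((z - z')/2)" by (simp add: field_simps)
  then have "ratio_raw z z' (x / y) = of_real (sqrt (x * y) / (x - y)) *
      (of_real (x / y) powr ((z - z')/2) - of_real (x / y) powr (-((z - z')/2)))"
    unfolding ratio_raw_def den by (simp only: divide_inverse inverse_inverse_eq mult.commute)
  then show ?thesis
    unfolding num minus_minus .
qed

lemma rGamma_Gamma_wronskian_eq:
  fixes z z' :: complex
  assumes "z \<noteq> z'"
  shows "rGamma z * rGamma z' * Gamma (z - z') * Gamma (z' - z)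
      * (rGamma (-z) * rGamma (1 - z') - rGamma (-z') * rGamma (1 - z))
    = sin (of_real pi * z) * sin (of_real pi * z') / (of_real pi * sin (of_real pi * (z - z')))"
proof -
  have "rGamma (-z) = -z * rGamma (1 - z)" "rGamma (-z') = -z' * rGamma (1 - z')"
    using rGamma_plus1[of "-z"] rGamma_plus1[of "-z'"] by (simp_all add: add.commute)
  then have "rGamma (-z) * rGamma (1 - z') - rGamma (-z') * rGamma (1 - z)
      = rGamma (1 - z) * rGamma (1 - z') * (z' - z)"
    by (simp add: algebra_simps)
  moreover have "Gamma (z - z') * Gamma (z' - z) = - of_real pi / ((z - z') * sin (of_real pi * (z - z')))"
    using Gamma_reflection_complex'[of "z - z'"] by simp
  ultimately have "rGamma z * rGamma z' * Gamma (z - z') * Gamma (z' - z)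
      * (rGamma (-z) * rGamma (1 - z') - rGamma (-z') * rGamma (1 - z))
    = (rGamma z * rGamma (1 - z)) * (rGamma z' * rGamma (1 - z'))
      * (- of_real pi / ((z - z') * sin (of_real pi * (z - z')))) * (z' - z)"
    by (simp add: mult_ac)
  also have "\<dots> = sin (of_real pi * z) / of_real pi * (sin (of_real pi * z') / of_real pi)
      * (- of_real pi / ((z - z') * sin (of_real pi * (z - z')))) * (z' - z)"
    unfolding rGamma_reflection_complex ..
  also have "\<dots> = sin (of_real pi * z) * sin (of_real pi * z') / (of_real pi * sin (of_real pi * (z - z')))"
    using assms by (cases "sin (of_real pi * (z - z')) = 0") (simp_all add: field_simps)
  finally show ?thesis .
qed

lemma whittakerW_part_wronskian_coefficient:
  fixes z z' :: complex
  assumes "z \<noteq> z'"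
  defines "\<mu> \<equiv> (z - z')/2" and "\<kappa>1 \<equiv> (z + z' + 1)/2" and "\<kappa>2 \<equiv> (z + z' - 1)/2"
  shows "rGamma z * rGamma z' * (whittakerW_part \<kappa>1 \<mu> 0 * whittakerW_part \<kappa>2 (-\<mu>) 0
      - whittakerW_part \<kappa>1 (-\<mu>) 0 * whittakerW_part \<kappa>2 \<mu> 0)
    = sin (of_real pi * z) * sin (of_real pi * z') / (of_real pi * sin (of_real pi * (z - z')))"
proof -
  have params: "-2*\<mu> = z' - z" "-2*-\<mu> = z - z'" "1/2 - \<mu> - \<kappa>1 = -z" "1/2 - -\<mu> - \<kappa>1 = -z'"
      "1/2 - \<mu> - \<kappa>2 = 1 - z" "1/2 - -\<mu> - \<kappa>2 = 1 - z'"
    by (simp_all add: \<mu>_def \<kappa>1_def \<kappa>2_def field_simps)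
  show ?thesis
    unfolding whittakerW_part_0 params rGamma_Gamma_wronskian_eq[OF assms(1), symmetric]
    by (simp add: algebra_simps)
qed

lemma whittaker_kernel_offdiag_remainder_eq:
  fixes z z' :: complex
  assumes "z \<noteq> z'" "0 < x" "0 < y" "x \<noteq> y"
  defines "\<mu> \<equiv> (z - z')/2" and "\<kappa>1 \<equiv> (z + z' + 1)/2" and "\<kappa>2 \<equiv> (z + z' - 1)/2"
  shows "of_real (sqrt (x * y)) * whittaker_kernel_offdiag z z' x y
      - sin (of_real pi * z) * sin (of_real pi * z') / (of_real pi * sin (of_real pi * (z - z')))
        * ratio_raw z z' (x / y)
    = rGamma z * rGamma z' * (of_real (sqrt (x * y) / (x - y))
        * (phi1 z z' x * phi2 z z' y - phi1 z z' y * phi2 z z' x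
          - (whittakerW_part \<kappa>1 \<mu> 0 * whittakerW_part \<kappa>2 (-\<mu>) 0
             - whittakerW_part \<kappa>1 (-\<mu>) 0 * whittakerW_part \<kappa>2 \<mu> 0)
            * (of_real x powr \<mu> * of_real y powr (-\<mu>) - of_real x powr (-\<mu>) * of_real y powr \<mu>)))"
proof -
  define u where "u = (of_real (sqrt (x * y) / (x - y)) :: complex)"
  have kernel: "of_real (sqrt (x * y)) * whittaker_kernel_offdiag z z' x y
      = rGamma z * rGamma z' * (u * (phi1 z z' x * phi2 z z' y - phi1 z z' y * phi2 z z' x))"
    using assms(4) unfolding whittaker_kernel_offdiag_def u_def by (simp add: field_simps)
  have ratio: "ratio_raw z z' (x / y)
      = u * (of_real x powr \<mu> * of_real y powr (-\<mu>) - of_real x powr (-\<mu>) * of_real y powr \<mu>)"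
    unfolding u_def \<mu>_def by (rule ratio_raw_divide[OF assms(2-4)])
  show ?thesis
    unfolding kernel ratio u_def[symmetric]
      whittakerW_part_wronskian_coefficient[OF assms(1), folded \<mu>_def \<kappa>1_def \<kappa>2_def, symmetric]
    by (simp add: algebra_simps)
qed

lemma whittaker_kernel_offdiag_main_term_bound:
  fixes z z' :: complex
  assumes "\<bar>Re z - Re z'\<bar> \<le> 1" "z \<noteq> z'"
  obtains C where "\<And>x y. 0 < x \<Longrightarrow> x \<le> 1 \<Longrightarrow> 0 < y \<Longrightarrow> y \<le> 1 \<Longrightarrow> x \<noteq> y \<Longrightarrow>
    norm (of_real (sqrt (x * y)) * whittaker_kernel_offdiag z z' x y
      - sin (of_real pi * z) * sin (of_real pi * z') / (of_real pi * sin (of_real pi * (z - z')))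
        * ratio_raw z z' (x / y))
    \<le> C * max x y powr (1 - \<bar>Re z - Re z'\<bar>)"
proof -
  define \<mu> where "\<mu> = (z - z')/2"
  define \<kappa>1 where "\<kappa>1 = (z + z' + 1)/2"
  define \<kappa>2 where "\<kappa>2 = (z + z' - 1)/2"
  define a1 where "a1 x = whittakerW_part \<kappa>1 \<mu> (of_real x)" for x
  define b1 where "b1 x = whittakerW_part \<kappa>1 (-\<mu>) (of_real x)" for x
  define a2 where "a2 x = whittakerW_part \<kappa>2 \<mu> (of_real x)" for x
  define b2 where "b2 x = whittakerW_part \<kappa>2 (-\<mu>) (of_real x)" for x
  obtain La1 Lb1 La2 Lb2 where lip: "La1-lipschitz_on {0..1} a1" "Lb1-lipschitz_on {0..1} b1"
      "La2-lipschitz_on {0..1} a2" "Lb2-lipschitz_on {0..1} b2"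
    unfolding a1_def b1_def a2_def b2_def by (metis lipschitz_on_whittakerW_part)
  moreover have "0 \<le> La1" "0 \<le> Lb1" "0 \<le> La2" "0 \<le> Lb2"
    using lip by (auto intro: lipschitz_on_nonneg)
  ultimately have lip_common: "(La1 + Lb1 + La2 + Lb2)-lipschitz_on {0..1} f" if "f \<in> {a1, b1, a2, b2}" for f
    using that by (auto elim!: lipschitz_on_le)
  have "\<bar>Re \<mu>\<bar> \<le> 1/2" using assms(1) by (simp add: \<mu>_def)
  from wronskian_remainder_bound[of \<mu> a1 b1 a2 b2, OF this lip_common]
  obtain C where C: "\<And>x y. 0 < x \<Longrightarrow> x \<le> 1 \<Longrightarrow> 0 < y \<Longrightarrow> y \<le> 1 \<Longrightarrow> x \<noteq> y \<Longrightarrow>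
    norm (of_real (sqrt (x * y) / (x - y))
      * ((of_real x powr \<mu> * a1 x + of_real x powr (-\<mu>) * b1 x) * (of_real y powr \<mu> * a2 y + of_real y powr (-\<mu>) * b2 y)
       - (of_real y powr \<mu> * a1 y + of_real y powr (-\<mu>) * b1 y) * (of_real x powr \<mu> * a2 x + of_real x powr (-\<mu>) * b2 x)
       - (a1 0 * b2 0 - b1 0 * a2 0)
        * (of_real x powr \<mu> * of_real y powr (-\<mu>) - of_real x powr (-\<mu>) * of_real y powr \<mu>)))
    \<le> C * max x y powr (1 - 2 * \<bar>Re \<mu>\<bar>)"
    by auto
  have phi: "phi1 z z' x = of_real x powr \<mu> * a1 x + of_real x powr (-\<mu>) * b1 x"
      "phi2 z z' x = of_real x powr \<mu> * a2 x + of_real x powr (-\<mu>) * b2 x" if "0 < x" for x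
    unfolding phi1_eq_whittakerW_reduced[OF that] phi2_eq_whittakerW_reduced[OF that] whittakerW_reduced_def
      a1_def b1_def a2_def b2_def \<kappa>1_def \<kappa>2_def \<mu>_def by simp_all
  have exponent: "2 * \<bar>Re \<mu>\<bar> = \<bar>Re z - Re z'\<bar>" by (simp add: \<mu>_def)
  show thesis
  proof (rule that[of "norm (rGamma z * rGamma z') * C"])
    fix x y :: real assume x: "0 < x" "x \<le> 1" and y: "0 < y" "y \<le> 1" and xy: "x \<noteq> y"
    have "norm (of_real (sqrt (x * y)) * whittaker_kernel_offdiag z z' x y
        - sin (of_real pi * z) * sin (of_real pi * z') / (of_real pi * sin (of_real pi * (z - z')))
          * ratio_raw z z' (x / y))
      \<le> norm (rGamma z * rGamma z') * (C * max x y powr (1 - 2 * \<bar>Re \<mu>\<bar>))"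
      unfolding whittaker_kernel_offdiag_remainder_eq[OF assms(2) x(1) y(1) xy] norm_mult[of "rGamma z * rGamma z'"]
        phi[OF x(1)] phi[OF y(1)]
      using C[OF x y xy] unfolding a1_def b1_def a2_def b2_def \<mu>_def \<kappa>1_def \<kappa>2_def of_real_0
      by (rule mult_left_mono) simp
    then show "norm (of_real (sqrt (x * y)) * whittaker_kernel_offdiag z z' x y
        - sin (of_real pi * z) * sin (of_real pi * z') / (of_real pi * sin (of_real pi * (z - z')))
          * ratio_raw z z' (x / y))
      \<le> norm (rGamma z * rGamma z') * C * max x y powr (1 - \<bar>Re z - Re z'\<bar>)"
      by (simp only: exponent mult.assoc)
  qed
qed

lemma filterlim_of_real_at: "filterlim (of_real :: real \<Rightarrow> 'a::real_normed_algebra_1) (at (of_real x)) (at x)"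
  unfolding filterlim_at
proof
  show "\<forall>\<^sub>F y in at x. (of_real y :: 'a) \<in> UNIV \<and> of_real y \<noteq> of_real x"
    by (auto simp: eventually_at_filter)
  show "((of_real :: real \<Rightarrow> 'a) \<longlongrightarrow> of_real x) (at x)"
    by (intro tendsto_intros)
qed

lemma holomorphic_on_real_difference_quotient_tendsto:
  assumes "f holomorphic_on S" "open S" "of_real x \<in> S"
  shows "((\<lambda>y. (f (of_real y) - f (of_real x)) / (of_real y - of_real x)) \<longlongrightarrow> deriv f (of_real x)) (at x)"
proof -
  have "(f has_field_derivative deriv f (of_real x)) (at (of_real x))"
    using holomorphic_derivI[OF assms] .
  then have "((\<lambda>w. (f w - f (of_real x)) / (w - of_real x)) \<longlongrightarrow> deriv f (of_real x)) (at (of_real x))"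
    by (simp add: has_field_derivative_iff)
  from filterlim_compose[OF this filterlim_of_real_at] show ?thesis by (simp add: o_def)
qed

lemma whittaker_kernel_offdiag_tendsto:
  assumes "0 < x"
  shows "\<exists>K. (whittaker_kernel_offdiag z z' x \<longlongrightarrow> K) (at x)"
proof -
  define P1 where "P1 = whittakerW_reduced ((z + z' + 1)/2) ((z - z')/2)"
  define P2 where "P2 = whittakerW_reduced ((z + z' - 1)/2) ((z - z')/2)"
  define g where "g w = P1 (of_real x) * P2 w - P1 w * P2 (of_real x)" for w
  have "g holomorphic_on {w. 0 < Re w}"
    unfolding g_def P1_def P2_def by (intro holomorphic_intros holomorphic_on_whittakerW_reduced)
  then have g: "((\<lambda>y. (g (of_real y) - g (of_real x)) / (of_real y - of_real x)) \<longlongrightarrow> deriv g (of_real x)) (at x)"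
    using assms by (intro holomorphic_on_real_difference_quotient_tendsto[OF _ open_halfspace_Re_gt]) auto
  have "\<forall>\<^sub>F y in at x. 0 < y" using assms by (rule order_tendstoD(1)[OF tendsto_ident_at])
  then have eq: "\<forall>\<^sub>F y in at x. - (rGamma z * rGamma z') * ((g (of_real y) - g (of_real x)) / (of_real y - of_real x))
      = whittaker_kernel_offdiag z z' x y"
  proof (rule eventually_mono)
    fix y :: real assume "0 < y"
    then have "g (of_real y) - g (of_real x) = phi1 z z' x * phi2 z z' y - phi1 z z' y * phi2 z z' x"
      using assms by (simp add: g_def P1_def P2_def phi1_eq_whittakerW_reduced phi2_eq_whittakerW_reduced)
    then show "- (rGamma z * rGamma z') * ((g (of_real y) - g (of_real x)) / (of_real y - of_real x))
        = whittaker_kernel_offdiag z z' x y"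
      unfolding whittaker_kernel_offdiag_def by (simp add: divide_minus_right[symmetric])
  qed
  have "((\<lambda>y. - (rGamma z * rGamma z') * ((g (of_real y) - g (of_real x)) / (of_real y - of_real x)))
      \<longlongrightarrow> - (rGamma z * rGamma z') * deriv g (of_real x)) (at x)"
    by (intro tendsto_intros g)
  from Lim_transform_eventually[OF this eq] show ?thesis ..
qed

lemma ratio_raw_tendsto: "\<exists>R. (ratio_raw z z' \<longlongrightarrow> R) (at 1)"
proof -
  define h where "h w = w powr ((z - z')/2) - w powr (-((z - z')/2))" for w :: complex
  have "h holomorphic_on {w. 0 < Re w}"
    unfolding h_def by (intro holomorphic_intros) (auto simp: complex_nonpos_Reals_iff)
  then have h: "((\<lambda>t. (h (of_real t) - h (of_real 1)) / (of_real t - of_real 1)) \<longlongrightarrow> deriv h 1) (at 1)"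
    using holomorphic_on_real_difference_quotient_tendsto[OF _ open_halfspace_Re_gt, of h 0 1] by simp
  have "\<forall>\<^sub>F t in at (1::real). 0 < t" by (rule order_tendstoD(1)[OF tendsto_ident_at]) simp
  then have eq: "\<forall>\<^sub>F t in at (1::real). of_real (sqrt t) * ((h (of_real t) - h (of_real 1)) / (of_real t - of_real 1))
      = ratio_raw z z' t"
  proof (rule eventually_mono)
    fix t :: real assume t: "0 < t"
    have den: "(of_real t :: complex) powr (1/2) - of_real t powr (-1/2) = (of_real t - 1) / of_real (sqrt t)"
      unfolding of_real_powr_half[OF less_imp_le[OF t]] of_real_powr_minus_half[OF less_imp_le[OF t]]
      using arg_cong[OF sqrt_sub_inverse_sqrt[OF t], of "of_real :: real \<Rightarrow> complex"] by simp
    have minus: "(z' - z)/2 = -((z - z')/2)" by (simp add: field_simps)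
    show "of_real (sqrt t) * ((h (of_real t) - h (of_real 1)) / (of_real t - of_real 1))
        = ratio_raw z z' t"
      unfolding ratio_raw_def h_def minus den by simp
  qed
  have "((\<lambda>t. of_real (sqrt t) * ((h (of_real t) - h (of_real 1)) / (of_real t - of_real 1)))
      \<longlongrightarrow> of_real (sqrt 1) * deriv h 1) (at (1::real))"
    by (intro tendsto_intros h)
  from Lim_transform_eventually[OF this eq] show ?thesis ..
qed

lemma r_prime_offdiag:
  assumes "0 < x" "0 < y" "x \<noteq> y"
  shows "r_prime z z' x y = of_real (sqrt (x * y)) * whittaker_kernel_offdiag z z' x y
    - sin (of_real pi * z) * sin (of_real pi * z') / (of_real pi * sin (of_real pi * (z - z')))
      * ratio_raw z z' (x / y)"
  using assms by (simp add: r_prime_def whittaker_kernel_def main_term_def ratio_fun_def)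

lemma r_prime_tendsto_diagonal:
  assumes "0 < x"
  shows "((\<lambda>y. r_prime z z' x y) \<longlongrightarrow> r_prime z z' x x) (at x)"
proof -
  obtain K where K: "(whittaker_kernel_offdiag z z' x \<longlongrightarrow> K) (at x)"
    using whittaker_kernel_offdiag_tendsto[OF assms] by blast
  obtain R where R: "(ratio_raw z z' \<longlongrightarrow> R) (at 1)"
    using ratio_raw_tendsto by blast
  have diagonal: "r_prime z z' x x = of_real (sqrt (x * x)) * K
      - sin (of_real pi * z) * sin (of_real pi * z') / (of_real pi * sin (of_real pi * (z - z'))) * R"
    using K R assms by (simp add: r_prime_def whittaker_kernel_def main_term_def ratio_fun_def tendsto_Lim)
  have "filterlim (\<lambda>y. x / y) (at 1) (at x)"
    unfolding filterlim_at
  proof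
    show "\<forall>\<^sub>F y in at x. x / y \<in> UNIV \<and> x / y \<noteq> 1"
      using assms by (auto simp: eventually_at_filter)
    show "((\<lambda>y. x / y) \<longlongrightarrow> 1) (at x)"
    proof -
      have "((\<lambda>y. x / y) \<longlongrightarrow> x / x) (at x)" using assms by (intro tendsto_intros) auto
      then show ?thesis using assms by simp
    qed
  qed
  then have lim: "((\<lambda>y. of_real (sqrt (x * y)) * whittaker_kernel_offdiag z z' x y
      - sin (of_real pi * z) * sin (of_real pi * z') / (of_real pi * sin (of_real pi * (z - z')))
        * ratio_raw z z' (x / y)) \<longlongrightarrow> r_prime z z' x x) (at x)"
    unfolding diagonal by (intro tendsto_intros K filterlim_compose[OF R])
  have "\<forall>\<^sub>F y in at x. 0 < y" by (rule order_tendstoD(1)[OF tendsto_ident_at assms])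
  moreover have "\<forall>\<^sub>F y in at x. y \<noteq> x" by (simp add: eventually_at_filter)
  ultimately have "\<forall>\<^sub>F y in at x. of_real (sqrt (x * y)) * whittaker_kernel_offdiag z z' x y
      - sin (of_real pi * z) * sin (of_real pi * z') / (of_real pi * sin (of_real pi * (z - z')))
        * ratio_raw z z' (x / y) = r_prime z z' x y"
    by eventually_elim (use assms in \<open>auto simp: r_prime_offdiag\<close>)
  with lim show ?thesis by (rule Lim_transform_eventually)
qed

lemma r_prime_bound:
  fixes z z' :: complex
  assumes "\<bar>Re z - Re z'\<bar> \<le> 1" "z \<noteq> z'"
  obtains C where "\<And>x y. 0 < x \<Longrightarrow> x < 1 \<Longrightarrow> 0 < y \<Longrightarrow> y < 1 \<Longrightarrow>
    norm (r_prime z z' x y) \<le> C * max x y powr (1 - \<bar>Re z - Re z'\<bar>)"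
proof -
  define e where "e = 1 - \<bar>Re z - Re z'\<bar>"
  obtain C where C: "\<And>x y. 0 < x \<Longrightarrow> x \<le> 1 \<Longrightarrow> 0 < y \<Longrightarrow> y \<le> 1 \<Longrightarrow> x \<noteq> y \<Longrightarrow>
      norm (r_prime z z' x y) \<le> C * max x y powr e"
    using whittaker_kernel_offdiag_main_term_bound[OF assms] unfolding e_def
    by (metis r_prime_offdiag)
  have "norm (r_prime z z' x y) \<le> C * max x y powr e" if x: "0 < x" "x < 1" and y: "0 < y" "y < 1" for x y
  proof (cases "x = y")
    case False
    with C x y show ?thesis by simp
  next
    case True
    have "\<forall>\<^sub>F y' in at x. 0 < y'" by (rule order_tendstoD(1)[OF tendsto_ident_at x(1)])
    moreover have "\<forall>\<^sub>F y' in at x. y' < 1" by (rule order_tendstoD(2)[OF tendsto_ident_at x(2)])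
    moreover have "\<forall>\<^sub>F y' in at x. y' \<noteq> x" by (simp add: eventually_at_filter)
    ultimately have "\<forall>\<^sub>F y' in at x. norm (r_prime z z' x y') \<le> C * max x y' powr e"
      by eventually_elim (use C x in auto)
    moreover have "((\<lambda>y'. C * max x y' powr e) \<longlongrightarrow> C * max x x powr e) (at x)"
      using x by (intro tendsto_intros) auto
    ultimately have "norm (r_prime z z' x x) \<le> C * max x x powr e"
      using tendsto_norm[OF r_prime_tendsto_diagonal[OF x(1)]] by (intro tendsto_le[OF trivial_limit_at])
    with True show ?thesis by simp
  qed
  then show thesis unfolding e_def by (rule that)
qed

lemma admissible_abs_Re_diff_less:
  assumes "admissible z z'"
  shows "\<bar>Re z - Re z'\<bar> < 1"
  using assms unfolding admissible_def by auto

theorem proposition4p1p3: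
  fixes z z' :: complex
  assumes "admissible z z'" and "z \<noteq> z'"
  shows "(\<forall>x y. x > 0 \<longrightarrow> y > 0 \<longrightarrow>
            whittaker_kernel z z' x y =
              (main_term z z' x y + r_prime z z' x y) / of_real (sqrt (x * y)))
       \<and> (z' = cnj z \<longrightarrow>
            (\<exists>C \<delta>. \<delta> > 0 \<and> (\<forall>x y. 0 < x \<longrightarrow> x < \<delta> \<longrightarrow> 0 < y \<longrightarrow> y < \<delta> \<longrightarrow>
               norm (r_prime z z' x y) \<le> C * max x y)))
       \<and> ((\<exists>m::int. z \<in> \<real> \<and> z' \<in> \<real> \<and> of_int m < Re z \<and> Re z < of_int m + 1 \<and>
                    of_int m < Re z' \<and> Re z' < of_int m + 1) \<longrightarrow>
            (\<exists>C \<delta>. \<delta> > 0 \<and> (\<forall>x y. 0 < x \<longrightarrow> x < \<delta> \<longrightarrow> 0 < y \<longrightarrow> y < \<delta> \<longrightarrow>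
               norm (r_prime z z' x y) \<le> C * max x y powr (1 - \<bar>Re z - Re z'\<bar>))))"
proof -
  have "\<bar>Re z - Re z'\<bar> \<le> 1" using admissible_abs_Re_diff_less[OF assms(1)] by simp
  then obtain C where C: "\<And>x y. 0 < x \<Longrightarrow> x < 1 \<Longrightarrow> 0 < y \<Longrightarrow> y < 1 \<Longrightarrow>
      norm (r_prime z z' x y) \<le> C * max x y powr (1 - \<bar>Re z - Re z'\<bar>)"
    using r_prime_bound assms(2) by blast
  have decomposition: "whittaker_kernel z z' x y = (main_term z z' x y + r_prime z z' x y) / of_real (sqrt (x * y))"
    if "0 < x" "0 < y" for x y
    using that by (simp add: r_prime_def)
  have conjugate_case: "norm (r_prime z z' x y) \<le> C * max x y"
    if "z' = cnj z" "0 < x" "x < 1" "0 < y" "y < 1" for x y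
    using C[OF that(2-)] that by simp
  show ?thesis
    using decomposition conjugate_case C by (intro conjI impI allI exI[of _ C] exI[of _ 1]) auto
qed

end
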